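(* Let $S=\langle S^G,S^\Delta\rangle$ be a triplestore schema and $r:A\rightarrow C$ a rule (as defined in the context). Then $\mathtt{score}(S,r)$ is a basic schema consequence of $S$ by $r$, i.e. $$\mathbb{I}(\mathtt{score}(S,r))=\bigcup_{I\in\mathbb{I}(S)}\{I' \mid I'\subseteq r(I)\}.$$
   Context: **RDF basics.** $\mathbb{U}$ (URIs), $\mathbb{L}$ (literals) and $\mathbb{V}$ (variables) are pairwise disjoint infinite sets; constants are elements of $\mathbb{U}\cup\mathbb{L}$. - A triple is an element of $\mathbb{U}\times\mathbb{U}\times(\mathbb{U}\cup\mathbb{L})$, and a graph is a finite set of triples. - A triple pattern is an element of $(\mathbb{U}\cup\mathbb{V})\times(\mathbb{U}\cup\mathbb{V})\times(\mathbb{U}\cup\mathbb{L}\cup\mathbb{V})$, and a graph pattern is a finite set of triple patterns. For a triple (pattern) $t$ and $i\in\tau=\{1,2,3\}$, $t[i]$ is its $i$-th element (subject, predicate, object). $vars(P)$ and $const(P)$ denote the variables and constants occurring in $P$. - A mapping is a partial function $m:\mathbb{V}\rightharpoonup\mathbb{U}\cup\mathbb{L}$ with domain $dom(m)$. For a pattern $p$, $m(p)$ replaces each $?v\in dom(m)$ by $m(?v)$ and leaves other variables unchanged. - For a graph pattern $P$ and graph $G$, $[\![P]\!]_G$ is the set of mappings $m$ with $dom(m)=vars(P)$ and $m(P)\subseteq G$. **Rules.** A rule $r:A\rightarrow C$ consists of graph patterns $A$ (antecedent) and $C$ (consequent) with $vars(C)\subseteq vars(A)$, where each variable occurs at most once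 in $C$. Its application to a graph $I$ is $$r(I)=I\cup\bigcup_{m\in[\![A]\!]_I}\{m(C) \text{ if } m(C) \text{ is a graph (i.e. no literal in subject/predicate position)}\}.$$ **Schemas.** A triplestore schema is a pair $S=\langle S^G,S^\Delta\rangle$ where: - $S^G$ is a finite set of triple patterns in which each variable occurs at most once (across and within triples); - $S^\Delta\subseteq vars(S^G)$ (the no-literal set) contains every variable occurring in subject or predicate position in $S^G$. A triple pattern $t^S$ models a triple $t$ (w.r.t. $S^\Delta$) if there is a mapping $\mu$ with $\mu(t^S)=t$ that binds no variable of $S^\Delta$ to a literal. The same definition is used when $t$ contains the special URI $\lambda$ below. A graph $I$ is an instance of $S$ if every triple of $I$ is modelled by some $t^S\in S^G$. $\mathbb{I}(S)$ denotes the set of instances of $S$. **Sandbox graph and rewriting.** Fix a fresh URI $\lambda$ not occurring in $S^G$, $A$ or $C$. - The sandbox graph $\mathbb{S}(S)$ consists of, for each $t^S\in S^G$, the triple obtained by replacing every variable in $t^S$ by $\lambda$. - For a triple pattern $t$, its rewritings are the (up to 8) triple patterns $t'$ with $t'[i]\in\{t[i],\lambda\}$ for each $i$. $\mathbb{Q}(A)$ is the set of graph patterns obtained by choosing one rewriting of each $t\in A$. - $[\![\mathbb{Q}(A)]\!]_{\mathbb{S}(S)}$ is the set of mappings $m$ with $dom(m)=vars(A)$ such that $m(q)\subseteq\mathbb{S}(S)$ for some $q\in\mathbb{Q}(A)$. **Definition of $\mathtt{score}(S,r)$.** Initialise $S'^G=S^G$ and $S'^\Delta=S^\Delta$. Then,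 for each $m\in[\![\mathbb{Q}(A)]\!]_{\mathbb{S}(S)}$: 1. Let $\Delta^m$ be the set of variables occurring in subject or predicate position in some triple of $A$ or $C$. 2. For each $t_A\in A$, let $T(t_A)$ be the set of $t^S\in S^G$ that model $m(t_q)$ for some rewriting $t_q$ of $t_A$ with $m(t_q)\in\mathbb{S}(S)$. - (a) If $t_A[3]$ is a literal $l$, or a variable with $m(t_A[3])=l\in\mathbb{L}$, and no $t^S\in T(t_A)$ has $t^S[3]=l$ or $t^S[3]\in vars(S^G)\setminus S^\Delta$, then discard $m$. - (b) If $t_A[3]$ is a variable with $m(t_A[3])=\lambda$ and no $t^S\in T(t_A)$ has $t^S[3]\in vars(S^G)\setminus S^\Delta$, then add $t_A[3]$ to $\Delta^m$. 3. Discard $m$ if it binds some variable of $\Delta^m$ to a literal. 4. If $m$ is not discarded, let $s^m$ be the substitution that maps each $?v$ with $m(?v)\neq\lambda$ to $m(?v)$, and each $?v$ with $m(?v)=\lambda$ to a fresh variable $?v^*$ (new for each $m$ and not used elsewhere). Add $s^m(C)$ to $S'^G$, and add $s^m(\Delta^m)\cap vars(S'^G)$ to $S'^\Delta$. $\mathtt{score}(S,r)$ is the resulting schema $\langle S'^G,S'^\Delta\rangle$. *)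

theory Defs
  imports Main
begin

datatype ('u,'l,'v) tm = U 'u | L 'l | V 'v

type_synonym ('u,'l,'v) tp = "('u,'l,'v) tm \<times> ('u,'l,'v) tm \<times> ('u,'l,'v) tm"
type_synonym ('u,'l,'v) mp = "'v \<Rightarrow> ('u,'l,'v) tm option"
type_synonym ('u,'l,'v) schema = "('u,'l,'v) tp set \<times> 'v set"

fun is_var :: "('u,'l,'v) tm \<Rightarrow> bool" where
  "is_var (V _) = True" | "is_var _ = False"
fun is_lit :: "('u,'l,'v) tm \<Rightarrow> bool" where
  "is_lit (L _) = True" | "is_lit _ = False"
fun is_uri :: "('u,'l,'v) tm \<Rightarrow> bool" where
  "is_uri (U _) = True" | "is_uri _ = False"

definition pos :: "nat \<Rightarrow> ('u,'l,'v) tp \<Rightarrow> ('u,'l,'v) tm" where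
  "pos i t = (case t of (s,p,ob) \<Rightarrow> if i = 1 then s else if i = 2 then p else ob)"

definition is_triple :: "('u,'l,'v) tp \<Rightarrow> bool" where
  "is_triple t = (is_uri (pos 1 t) \<and> is_uri (pos 2 t) \<and> \<not> is_var (pos 3 t))"

definition is_tpat :: "('u,'l,'v) tp \<Rightarrow> bool" where
  "is_tpat t = (\<not> is_lit (pos 1 t) \<and> \<not> is_lit (pos 2 t))"

definition is_graph :: "('u,'l,'v) tp set \<Rightarrow> bool" where
  "is_graph G = (finite G \<and> (\<forall>t\<in>G. is_triple t))"

definition is_gpat :: "('u,'l,'v) tp set \<Rightarrow> bool" where
  "is_gpat P = (finite P \<and> (\<forall>t\<in>P. is_tpat t))"

fun tvars :: "('u,'l,'v) tm \<Rightarrow> 'v set" where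
  "tvars (V v) = {v}" | "tvars _ = {}"
fun turis :: "('u,'l,'v) tm \<Rightarrow> 'u set" where
  "turis (U u) = {u}" | "turis _ = {}"

definition vars_tp :: "('u,'l,'v) tp \<Rightarrow> 'v set" where
  "vars_tp t = tvars (pos 1 t) \<union> tvars (pos 2 t) \<union> tvars (pos 3 t)"
definition vars :: "('u,'l,'v) tp set \<Rightarrow> 'v set" where
  "vars P = (\<Union>t\<in>P. vars_tp t)"
definition uris :: "('u,'l,'v) tp set \<Rightarrow> 'u set" where
  "uris P = (\<Union>t\<in>P. turis (pos 1 t) \<union> turis (pos 2 t) \<union> turis (pos 3 t))"

definition linear :: "('u,'l,'v) tp set \<Rightarrow> bool" where
  "linear P = (\<forall>t\<in>P. \<forall>t'\<in>P. \<forall>i\<in>{1,2,3}. \<forall>j\<in>{1,2,3}.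
       is_var (pos i t) \<and> pos i t = pos j t' \<longrightarrow> t = t' \<and> i = j)"

definition wf_map :: "('u,'l,'v) mp \<Rightarrow> bool" where
  "wf_map m = (\<forall>c\<in>ran m. \<not> is_var c)"

fun app_tm :: "('u,'l,'v) mp \<Rightarrow> ('u,'l,'v) tm \<Rightarrow> ('u,'l,'v) tm" where
  "app_tm m (V v) = (case m v of Some c \<Rightarrow> c | None \<Rightarrow> V v)"
| "app_tm m c = c"

definition app_tp :: "('u,'l,'v) mp \<Rightarrow> ('u,'l,'v) tp \<Rightarrow> ('u,'l,'v) tp" where
  "app_tp m t = (app_tm m (pos 1 t), app_tm m (pos 2 t), app_tm m (pos 3 t))"

definition app_gp :: "('u,'l,'v) mp \<Rightarrow> ('u,'l,'v) tp set \<Rightarrow> ('u,'l,'v) tp set" where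
  "app_gp m P = app_tp m ` P"

definition eval :: "('u,'l,'v) tp set \<Rightarrow> ('u,'l,'v) tp set \<Rightarrow> ('u,'l,'v) mp set" where
  "eval P G = {m. dom m = vars P \<and> wf_map m \<and> app_gp m P \<subseteq> G}"

definition rule_ok :: "('u,'l,'v) tp set \<Rightarrow> ('u,'l,'v) tp set \<Rightarrow> bool" where
  "rule_ok A C = (is_gpat A \<and> is_gpat C \<and> vars C \<subseteq> vars A \<and> linear C)"

definition rule_app :: "('u,'l,'v) tp set \<Rightarrow> ('u,'l,'v) tp set \<Rightarrow> ('u,'l,'v) tp set \<Rightarrow> ('u,'l,'v) tp set" where
  "rule_app A C I = I \<union> \<Union> {app_gp m C | m. m \<in> eval A I \<and> is_graph (app_gp m C)}"

definition schema_ok :: "('u,'l,'v) schema \<Rightarrow> bool" where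
  "schema_ok S = (is_gpat (fst S) \<and> linear (fst S) \<and> snd S \<subseteq> vars (fst S) \<and>
     (\<forall>t\<in>fst S. \<forall>i\<in>{1,2}. \<forall>v. pos i t = V v \<longrightarrow> v \<in> snd S))"

definition models :: "'v set \<Rightarrow> ('u,'l,'v) tp \<Rightarrow> ('u,'l,'v) tp \<Rightarrow> bool" where
  "models D tS t = (\<exists>\<mu>. wf_map \<mu> \<and> app_tp \<mu> tS = t \<and> (\<forall>v\<in>D. \<forall>l. \<mu> v \<noteq> Some (L l)))"

definition instances :: "('u,'l,'v) schema \<Rightarrow> ('u,'l,'v) tp set set" where
  "instances S = {I. is_graph I \<and> (\<forall>t\<in>I. \<exists>tS\<in>fst S. models (snd S) tS t)}"

section \<open>Sandbox graph and rewritings (lam is the fresh URI \<lambda>)\<close>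

fun sb_tm :: "'u \<Rightarrow> ('u,'l,'v) tm \<Rightarrow> ('u,'l,'v) tm" where
  "sb_tm lam (V _) = U lam" | "sb_tm lam c = c"

definition sandbox :: "'u \<Rightarrow> ('u,'l,'v) tp set \<Rightarrow> ('u,'l,'v) tp set" where
  "sandbox lam SG = (\<lambda>t. (sb_tm lam (pos 1 t), sb_tm lam (pos 2 t), sb_tm lam (pos 3 t))) ` SG"

definition rewritings :: "'u \<Rightarrow> ('u,'l,'v) tp \<Rightarrow> ('u,'l,'v) tp set" where
  "rewritings lam t = {t'. \<forall>i\<in>{1,2,3}. pos i t' \<in> {pos i t, U lam}}"

definition Qrw :: "'u \<Rightarrow> ('u,'l,'v) tp set \<Rightarrow> ('u,'l,'v) tp set set" where
  "Qrw lam A = {f ` A | f. \<forall>t\<in>A. f t \<in> rewritings lam t}"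

definition sb_eval :: "'u \<Rightarrow> ('u,'l,'v) tp set \<Rightarrow> ('u,'l,'v) tp set \<Rightarrow> ('u,'l,'v) mp set" where
  "sb_eval lam A SG = {m. dom m = vars A \<and> wf_map m \<and>
       (\<exists>q\<in>Qrw lam A. app_gp m q \<subseteq> sandbox lam SG)}"

definition Tset :: "'u \<Rightarrow> ('u,'l,'v) schema \<Rightarrow> ('u,'l,'v) mp \<Rightarrow> ('u,'l,'v) tp \<Rightarrow> ('u,'l,'v) tp set" where
  "Tset lam S m tA = {tS\<in>fst S. \<exists>tq\<in>rewritings lam tA.
       app_tp m tq \<in> sandbox lam (fst S) \<and> models (snd S) tS (app_tp m tq)}"

definition open_vars :: "('u,'l,'v) schema \<Rightarrow> 'v set" where
  "open_vars S = vars (fst S) - snd S"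

definition cond_a :: "'u \<Rightarrow> ('u,'l,'v) schema \<Rightarrow> ('u,'l,'v) mp \<Rightarrow> ('u,'l,'v) tp \<Rightarrow> bool" where
  "cond_a lam S m tA = (\<exists>l. (pos 3 tA = L l \<or> (\<exists>v. pos 3 tA = V v \<and> m v = Some (L l))) \<and>
      \<not> (\<exists>tS\<in>Tset lam S m tA. pos 3 tS = L l \<or> (\<exists>w. pos 3 tS = V w \<and> w \<in> open_vars S)))"

definition cond_b :: "'u \<Rightarrow> ('u,'l,'v) schema \<Rightarrow> ('u,'l,'v) mp \<Rightarrow> ('u,'l,'v) tp \<Rightarrow> bool" where
  "cond_b lam S m tA = ((\<exists>v. pos 3 tA = V v \<and> m v = Some (U lam)) \<and>
      \<not> (\<exists>tS\<in>Tset lam S m tA. \<exists>w. pos 3 tS = V w \<and> w \<in> open_vars S))"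

definition Delta_m :: "'u \<Rightarrow> ('u,'l,'v) schema \<Rightarrow> ('u,'l,'v) tp set \<Rightarrow> ('u,'l,'v) tp set \<Rightarrow> ('u,'l,'v) mp \<Rightarrow> 'v set" where
  "Delta_m lam S A C m =
     {v. \<exists>t\<in>A \<union> C. \<exists>i\<in>{1,2}. pos i t = V v} \<union>
     {v. \<exists>tA\<in>A. pos 3 tA = V v \<and> cond_b lam S m tA}"

definition discarded :: "'u \<Rightarrow> ('u,'l,'v) schema \<Rightarrow> ('u,'l,'v) tp set \<Rightarrow> ('u,'l,'v) tp set \<Rightarrow> ('u,'l,'v) mp \<Rightarrow> bool" where
  "discarded lam S A C m = ((\<exists>tA\<in>A. cond_a lam S m tA) \<or>
      (\<exists>v\<in>Delta_m lam S A C m. \<exists>l. m v = Some (L l)))"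

definition kept :: "'u \<Rightarrow> ('u,'l,'v) schema \<Rightarrow> ('u,'l,'v) tp set \<Rightarrow> ('u,'l,'v) tp set \<Rightarrow> ('u,'l,'v) mp set" where
  "kept lam S A C = {m \<in> sb_eval lam A (fst S). \<not> discarded lam S A C m}"

text \<open>The substitution s^m; fr m v is the fresh variable ?v^* chosen for m.\<close>
fun sm_tm :: "'u \<Rightarrow> (('u,'l,'v) mp \<Rightarrow> 'v \<Rightarrow> 'v) \<Rightarrow> ('u,'l,'v) mp \<Rightarrow> ('u,'l,'v) tm \<Rightarrow> ('u,'l,'v) tm" where
  "sm_tm lam fr m (V v) = (case m v of Some c \<Rightarrow> (if c = U lam then V (fr m v) else c) | None \<Rightarrow> V v)"
| "sm_tm lam fr m c = c"

definition sm_gp :: "'u \<Rightarrow> (('u,'l,'v) mp \<Rightarrow> 'v \<Rightarrow> 'v) \<Rightarrow> ('u,'l,'v) mp \<Rightarrow> ('u,'l,'v) tp set \<Rightarrow> ('u,'l,'v) tp set" where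
  "sm_gp lam fr m P = (\<lambda>t. (sm_tm lam fr m (pos 1 t), sm_tm lam fr m (pos 2 t), sm_tm lam fr m (pos 3 t))) ` P"

definition score :: "'u \<Rightarrow> (('u,'l,'v) mp \<Rightarrow> 'v \<Rightarrow> 'v) \<Rightarrow> ('u,'l,'v) schema \<Rightarrow>
     ('u,'l,'v) tp set \<Rightarrow> ('u,'l,'v) tp set \<Rightarrow> ('u,'l,'v) schema" where
  "score lam fr S A C =
    (let K = kept lam S A C;
         G' = fst S \<union> (\<Union>m\<in>K. sm_gp lam fr m C);
         D' = snd S \<union> ((\<Union>m\<in>K. {w. \<exists>v\<in>Delta_m lam S A C m. sm_tm lam fr m (V v) = V w}) \<inter> vars G')
     in (G', D'))"

definition fresh_choice :: "'u \<Rightarrow> (('u,'l,'v) mp \<Rightarrow> 'v \<Rightarrow> 'v) \<Rightarrow> ('u,'l,'v) schema \<Rightarrow>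
     ('u,'l,'v) tp set \<Rightarrow> ('u,'l,'v) tp set \<Rightarrow> bool" where
  "fresh_choice lam fr S A C =
     (lam \<notin> uris (fst S) \<union> uris A \<union> uris C \<and>
      (let P = {(m,v). m \<in> sb_eval lam A (fst S) \<and> m v = Some (U lam)} in
        inj_on (\<lambda>(m,v). fr m v) P \<and>
        (\<forall>(m,v)\<in>P. fr m v \<notin> vars (fst S) \<union> vars A \<union> vars C)))"

end

theory Submission
  imports Defs
begin

text \<open>
  Soundness. A triple of an instance of score(S, r) is modelled either by an original schema
  triple, and then it is a one-triple instance of S, or by s^m(c) for a kept sandbox mapping m and
  some c in C. In the latter case the modelling substitution, read through the fresh variables
  ?v^*, replaces the placeholders \<lambda> of m by constants. The resulting mapping m' still sends every
  antecedent triple into a triple modelled by S: the discard conditions 2(a) and 3, together with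
  the variables added to S'^\<Delta>, are exactly what keeps literals away from no-literal positions.
  So the triple lies in r(m'(A)), and finitely many such instances of S join into one.

  Completeness. Let m be a match of A in an instance I of S, and choose for each antecedent triple
  a schema triple modelling its image. Forgetting each value of m that the chosen schema triples
  do not fix as a constant, i.e. replacing it by \<lambda>, gives a kept sandbox mapping, and the
  corresponding s^m(c) models m(c): it is a linear pattern because C is linear and the fresh
  variables are distinct, and none of its variables in S'^\<Delta> has to take a literal.
\<close>

section \<open>Positions, mappings and the models relation\<close>

lemma pos_simps [simp]:
  "pos 1 (a, b, c) = a" "pos (Suc 0) (a, b, c) = a" "pos 2 (a, b, c) = b" "pos 3 (a, b, c) = c"
  by (simp_all add: pos_def)

lemma triple_eqI:
  "pos 1 t = pos 1 t' \<Longrightarrow> pos 2 t = pos 2 t' \<Longrightarrow> pos 3 t = pos 3 t' \<Longrightarrow> t = t'"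
  by (cases t; cases t') simp

lemma pos_app_tp [simp]: "pos i (app_tp m t) = app_tm m (pos i t)"
  by (cases t) (auto simp: pos_def app_tp_def)

definition sb_tp :: "'u \<Rightarrow> ('u,'l,'v) tp \<Rightarrow> ('u,'l,'v) tp" where
  "sb_tp lam t = (sb_tm lam (pos 1 t), sb_tm lam (pos 2 t), sb_tm lam (pos 3 t))"

lemma pos_sb_tp [simp]: "pos i (sb_tp lam t) = sb_tm lam (pos i t)"
  by (cases t) (auto simp: pos_def sb_tp_def)

lemma sandbox_eq: "sandbox lam P = sb_tp lam ` P"
  by (simp add: sandbox_def sb_tp_def)

definition sm_tp :: "'u \<Rightarrow> (('u,'l,'v) mp \<Rightarrow> 'v \<Rightarrow> 'v) \<Rightarrow> ('u,'l,'v) mp \<Rightarrow> ('u,'l,'v) tp \<Rightarrow> ('u,'l,'v) tp" where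
  "sm_tp lam fr m t = (sm_tm lam fr m (pos 1 t), sm_tm lam fr m (pos 2 t), sm_tm lam fr m (pos 3 t))"

lemma pos_sm_tp [simp]: "pos i (sm_tp lam fr m t) = sm_tm lam fr m (pos i t)"
  by (cases t) (auto simp: pos_def sm_tp_def)

lemma sm_gp_eq: "sm_gp lam fr m P = sm_tp lam fr m ` P"
  by (simp add: sm_gp_def sm_tp_def)

lemma const_tm_cases: "\<not> is_var c \<Longrightarrow> (\<exists>u. c = U u) \<or> (\<exists>l. c = L l)"
  by (cases c) auto

lemma app_tm_const [simp]: "\<not> is_var c \<Longrightarrow> app_tm m c = c"
  by (cases c) auto

lemma sb_tm_const [simp]: "\<not> is_var c \<Longrightarrow> sb_tm lam c = c"
  by (cases c) auto

lemma sm_tm_const [simp]: "\<not> is_var c \<Longrightarrow> sm_tm lam fr m c = c"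
  by (cases c) auto

lemma app_tm_V_const: "app_tm m (V x) = d \<Longrightarrow> \<not> is_var d \<Longrightarrow> m x = Some d"
  by (cases "m x") auto

lemma wf_mapD: "wf_map m \<Longrightarrow> m x = Some d \<Longrightarrow> \<not> is_var d"
  by (auto simp: wf_map_def ran_def)

lemma wf_map_domE:
  assumes "wf_map m" "x \<in> dom m" obtains d where "m x = Some d" "\<not> is_var d"
  using assms by (metis domD wf_mapD)

lemma tvars_iff [simp]: "x \<in> tvars c \<longleftrightarrow> c = V x"
  by (cases c) auto

lemma finite_tvars [simp]: "finite (tvars c)"
  by (cases c) auto

lemma vars_tpI: "pos i t = V x \<Longrightarrow> x \<in> vars_tp t"
  by (cases t) (auto simp: vars_tp_def pos_def split: if_splits)

lemma varsI: assumes "t \<in> P" "pos i t = V x" shows "x \<in> vars P"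
  using assms(1) vars_tpI[OF assms(2)] unfolding vars_def by (rule UN_I)

lemma vars_tpE:
  assumes "x \<in> vars_tp t" obtains i where "i \<in> {1, 2, 3}" "pos i t = V x"
proof -
  have "pos 1 t = V x \<or> pos 2 t = V x \<or> pos 3 t = V x"
    using assms by (auto simp: vars_tp_def)
  then show thesis
    using that by blast
qed

lemma varsE:
  assumes "x \<in> vars P" obtains t i where "t \<in> P" "i \<in> {1, 2, 3}" "pos i t = V x"
  using assms unfolding vars_def by (meson UN_E vars_tpE)

lemma pos_neq_fresh_uri: "t \<in> P \<Longrightarrow> lam \<notin> uris P \<Longrightarrow> pos i t \<noteq> U lam"
  by (cases t) (auto simp: uris_def pos_def split: if_splits)

lemma triple_not_var: "is_triple t \<Longrightarrow> \<not> is_var (pos i t)"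
  by (cases t) (auto simp: is_triple_def pos_def elim: is_uri.elims)

lemma triple_uri: "is_triple t \<Longrightarrow> i \<in> {1, 2} \<Longrightarrow> \<exists>u. pos i t = U u"
  by (auto simp: is_triple_def elim: is_uri.elims)

lemma is_tripleI:
  "(\<And>i. i \<in> {1, 2} \<Longrightarrow> \<exists>u. pos i t = U u) \<Longrightarrow> \<not> is_var (pos 3 t) \<Longrightarrow> is_triple t"
  unfolding is_triple_def by (metis insertCI is_uri.simps(1))

lemma rewritings_pos: "t' \<in> rewritings lam t \<Longrightarrow> pos i t' = pos i t \<or> pos i t' = U lam"
  by (cases t; cases t') (auto simp: rewritings_def pos_def)

lemma linear_singletonD:
  "linear {t} \<Longrightarrow> i \<in> {1, 2, 3} \<Longrightarrow> j \<in> {1, 2, 3} \<Longrightarrow> pos i t = V w \<Longrightarrow> pos j t = V w \<Longrightarrow> i = j"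
  unfolding linear_def by (metis is_var.simps(1) singletonI)

lemma linear_singletonI:
  assumes "\<And>i j w. i \<in> {1, 2, 3} \<Longrightarrow> j \<in> {1, 2, 3} \<Longrightarrow> pos i t = V w \<Longrightarrow> pos j t = V w \<Longrightarrow> i = j"
  shows "linear {t}"
  unfolding linear_def
proof (intro ballI impI, elim conjE)
  fix t1 t2 i j
  assume t: "t1 \<in> {t}" "t2 \<in> {t}" and ij: "i \<in> {1, 2, 3}" "j \<in> {1, 2, 3}"
    and "is_var (pos i t1)" "pos i t1 = pos j t2"
  then obtain w where "pos i t = V w" "pos j t = V w"
    by (auto elim: is_var.elims)
  then show "t1 = t2 \<and> i = j"
    using assms[OF ij] t by simp
qed

lemma app_tp_cong:
  assumes "\<And>w. w \<in> vars_tp t \<Longrightarrow> \<mu> w = \<mu>' w" shows "app_tp \<mu> t = app_tp \<mu>' t"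
proof -
  have "app_tm \<mu> (pos i t) = app_tm \<mu>' (pos i t)" for i
    using assms vars_tpI[of i t] by (cases "pos i t") auto
  then show ?thesis by (intro triple_eqI) simp_all
qed

lemma models_sandbox:
  fixes tS :: "('u,'l,'v) tp" shows "models D tS (sb_tp lam tS)"
proof -
  have "app_tm (\<lambda>_::'v. Some (U lam)) c = sb_tm lam c" for c :: "('u,'l,'v) tm"
    by (cases c) auto
  then have "app_tp (\<lambda>_. Some (U lam)) tS = sb_tp lam tS"
    by (intro triple_eqI) simp_all
  moreover have "wf_map (\<lambda>_::'v. Some (U lam :: ('u,'l,'v) tm))"
    by (auto simp: wf_map_def ran_def)
  ultimately show ?thesis unfolding models_def by auto
qed

lemma models_const_pos: "models D tS t \<Longrightarrow> \<not> is_var (pos i tS) \<Longrightarrow> pos i t = pos i tS"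
  unfolding models_def by (metis app_tm_const pos_app_tp)

lemma models_literal_pos:
  assumes "models D tS t" "pos i t = L l"
  shows "pos i tS = L l \<or> (\<exists>w. pos i tS = V w \<and> w \<notin> D)"
proof -
  obtain \<mu> where \<mu>: "app_tp \<mu> tS = t" "\<forall>v\<in>D. \<forall>l. \<mu> v \<noteq> Some (L l)"
    using assms(1) unfolding models_def by blast
  then have "app_tm \<mu> (pos i tS) = L l"
    using assms(2) by (metis pos_app_tp)
  then show ?thesis
    using \<mu>(2) by (cases "pos i tS") (auto split: option.splits)
qed

lemma models_nolit_antimono:
  assumes "models D tS t" "D' \<inter> vars_tp tS \<subseteq> D" shows "models D' tS t"
proof -
  obtain \<mu> where \<mu>: "wf_map \<mu>" "app_tp \<mu> tS = t" "\<forall>v\<in>D. \<forall>l. \<mu> v \<noteq> Some (L l)"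
    using assms(1) unfolding models_def by blast
  define \<mu>' where "\<mu>' w = (if w \<in> vars_tp tS then \<mu> w else None)" for w
  have "app_tp \<mu>' tS = t"
    using \<mu>(2) app_tp_cong[of tS \<mu>' \<mu>] by (simp add: \<mu>'_def)
  moreover have "wf_map \<mu>'"
    using \<mu>(1) by (auto simp: wf_map_def ran_def \<mu>'_def)
  moreover have "\<forall>v\<in>D'. \<forall>l. \<mu>' v \<noteq> Some (L l)"
    using \<mu>(3) assms(2) by (auto simp: \<mu>'_def)
  ultimately show ?thesis unfolding models_def by blast
qed

lemma models_linearI:
  assumes lin: "linear {tS}"
    and ground: "\<And>i. \<not> is_var (pos i t)"
    and const: "\<And>i. \<not> is_var (pos i tS) \<Longrightarrow> pos i t = pos i tS"
    and nolit: "\<And>i w l. i \<in> {1, 2, 3} \<Longrightarrow> pos i tS = V w \<Longrightarrow> w \<in> D \<Longrightarrow> pos i t \<noteq> L l"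
  shows "models D tS t"
proof -
  let ?occ = "\<lambda>w k. k \<in> {1, 2, 3} \<and> pos k tS = V w"
  define \<mu> where "\<mu> w = (if \<exists>k. ?occ w k then Some (pos (SOME k. ?occ w k) t) else None)" for w
  have \<mu>_SomeD: "\<exists>k. ?occ w k \<and> d = pos k t" if "\<mu> w = Some d" for w d
    using that someI_ex[of "?occ w"] by (auto simp: \<mu>_def split: if_split_asm)
  have \<mu>_pos: "\<mu> w = Some (pos i t)" if "?occ w i" for i w
  proof -
    have "(SOME k. ?occ w k) = i"
      using that linear_singletonD[OF lin] by (intro some_equality) blast+
    then show ?thesis
      using that by (auto simp: \<mu>_def)
  qed
  have "app_tm \<mu> (pos i tS) = pos i t" if "i \<in> {1, 2, 3}" for i
    using that \<mu>_pos const[of i] by (cases "pos i tS") auto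
  then have "app_tp \<mu> tS = t"
    by (intro triple_eqI) simp_all
  moreover have "wf_map \<mu>"
    using ground \<mu>_SomeD unfolding wf_map_def ran_def by blast
  moreover have "\<forall>v\<in>D. \<forall>l. \<mu> v \<noteq> Some (L l)"
    using nolit \<mu>_SomeD by metis
  ultimately show ?thesis unfolding models_def by blast
qed

lemma finite_eval:
  assumes "finite I" "finite A" shows "finite (eval A I)"
proof -
  let ?T = "(\<Union>t\<in>I. {pos 1 t, pos 2 t, pos 3 t})"
  have "ran m \<subseteq> ?T" if m: "m \<in> eval A I" for m
  proof
    fix d assume "d \<in> ran m"
    then obtain x where x: "m x = Some d" by (auto simp: ran_def)
    then have "x \<in> vars A" using m by (auto simp: eval_def)
    then obtain tA i where tA: "tA \<in> A" "i \<in> {1, 2, 3}" "pos i tA = V x" by (rule varsE)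
    have "app_tp m tA \<in> I" using m tA(1) by (auto simp: eval_def app_gp_def)
    moreover have "pos i (app_tp m tA) = d" using tA(3) x by simp
    ultimately show "d \<in> ?T" using tA(2) by blast
  qed
  then have "eval A I \<subseteq> {m. dom m = vars A \<and> ran m \<subseteq> ?T}"
    by (auto simp: eval_def)
  moreover have "finite {m. dom m = vars A \<and> ran m \<subseteq> ?T}"
    using assms by (intro finite_set_of_finite_maps) (auto simp: vars_def vars_tp_def)
  ultimately show ?thesis by (rule finite_subset)
qed

lemma rule_app_mono: "I \<subseteq> J \<Longrightarrow> rule_app A C I \<subseteq> rule_app A C J"
  unfolding rule_app_def eval_def by blast

lemma is_graph_Union: "finite F \<Longrightarrow> \<forall>G\<in>F. is_graph G \<Longrightarrow> is_graph (\<Union>F)"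
  by (auto simp: is_graph_def)

lemma is_graph_rule_app:
  assumes "is_graph I" "finite A" shows "is_graph (rule_app A C I)"
proof -
  let ?F = "{app_gp m C | m. m \<in> eval A I \<and> is_graph (app_gp m C)}"
  have "?F \<subseteq> (\<lambda>m. app_gp m C) ` eval A I" by blast
  moreover have "finite (eval A I)"
    using assms finite_eval unfolding is_graph_def by blast
  ultimately have "is_graph (\<Union>?F)"
    by (intro is_graph_Union) (auto intro: finite_subset)
  then show ?thesis
    using assms(1) unfolding rule_app_def is_graph_def by blast
qed

lemma instances_UN:
  "finite X \<Longrightarrow> (\<And>x. x \<in> X \<Longrightarrow> J x \<in> instances S) \<Longrightarrow> (\<Union>x\<in>X. J x) \<in> instances S"
  by (auto simp: instances_def is_graph_def)

lemma subset_rule_app_instanceI: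
  assumes "finite I'" "\<And>t. t \<in> I' \<Longrightarrow> \<exists>J\<in>instances S. t \<in> rule_app A C J"
  shows "\<exists>I\<in>instances S. I' \<subseteq> rule_app A C I"
proof -
  obtain J where J: "\<And>t. t \<in> I' \<Longrightarrow> J t \<in> instances S \<and> t \<in> rule_app A C (J t)"
    using assms(2) by metis
  have "I' \<subseteq> rule_app A C (\<Union>t\<in>I'. J t)"
    using J rule_app_mono[of "J _" "\<Union>t\<in>I'. J t" A C] by blast
  moreover have "(\<Union>t\<in>I'. J t) \<in> instances S"
    using J assms(1) by (intro instances_UN) auto
  ultimately show ?thesis by blast
qed

section \<open>Soundness of the score schema\<close>

lemma linear_subset: "linear P \<Longrightarrow> Q \<subseteq> P \<Longrightarrow> linear Q"
  unfolding linear_def by blast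

locale score_setting =
  fixes S :: "('u,'l,'v) schema" and A C :: "('u,'l,'v) tp set"
    and lam :: 'u and fr :: "('u,'l,'v) mp \<Rightarrow> 'v \<Rightarrow> 'v"
  assumes schema_ok: "schema_ok S" and rule_ok: "rule_ok A C" and fresh: "fresh_choice lam fr S A C"
begin

abbreviation "SG \<equiv> fst S"
abbreviation "SD \<equiv> snd S"
abbreviation "SB \<equiv> sb_eval lam A SG"
abbreviation "K \<equiv> kept lam S A C"
abbreviation "Dm \<equiv> Delta_m lam S A C"

definition "G' = SG \<union> (\<Union>m\<in>K. sm_tp lam fr m ` C)"
definition "D' = SD \<union> ((\<Union>m\<in>K. {w. \<exists>v\<in>Dm m. sm_tm lam fr m (V v) = V w}) \<inter> vars G')"

lemma score_eq: "score lam fr S A C = (G', D')"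
  unfolding score_def Let_def G'_def D'_def sm_gp_eq by simp

lemma finite_A: "finite A"
  using rule_ok by (simp add: rule_ok_def is_gpat_def)

lemma finite_C: "finite C"
  using rule_ok by (simp add: rule_ok_def is_gpat_def)

lemma linear_SG: "linear SG"
  using schema_ok by (simp add: schema_ok_def)

lemma SD_subset: "SD \<subseteq> vars SG"
  using schema_ok by (simp add: schema_ok_def)

lemma lam_fresh: "lam \<notin> uris SG"
  using fresh by (simp add: fresh_choice_def)

lemma rule_pos_not_lit: "t \<in> A \<union> C \<Longrightarrow> i \<in> {1, 2} \<Longrightarrow> \<not> is_lit (pos i t)"
  using rule_ok by (auto simp: rule_ok_def is_gpat_def is_tpat_def)

lemma rule_varsI: "t \<in> A \<union> C \<Longrightarrow> pos i t = V x \<Longrightarrow> x \<in> vars A"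
  using rule_ok varsI[of t _ i x] by (auto simp: rule_ok_def)

lemma fr_inj:
  assumes "m \<in> SB" "m v = Some (U lam)" "m' \<in> SB" "m' v' = Some (U lam)" "fr m v = fr m' v'"
  shows "m = m' \<and> v = v'"
proof -
  have "inj_on (\<lambda>(m, v). fr m v) {(m, v). m \<in> SB \<and> m v = Some (U lam)}"
    using fresh unfolding fresh_choice_def Let_def by blast
  from inj_onD[OF this, of "(m, v)" "(m', v')"] show ?thesis
    using assms by simp
qed

lemma fr_fresh: "m \<in> SB \<Longrightarrow> m v = Some (U lam) \<Longrightarrow> fr m v \<notin> vars SG"
  using fresh unfolding fresh_choice_def Let_def by blast

lemma sb_evalD: "m \<in> SB \<Longrightarrow> dom m = vars A \<and> wf_map m"
  unfolding sb_eval_def by blast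

lemma sb_eval_valueE:
  assumes "m \<in> SB" "x \<in> vars A" obtains d where "m x = Some d" "\<not> is_var d"
  using assms sb_evalD wf_map_domE by metis

lemma kept_sb_eval: "m \<in> K \<Longrightarrow> m \<in> SB"
  unfolding kept_def by blast

lemma Delta_m_subset: "Dm m \<subseteq> vars A"
  unfolding Delta_m_def using rule_varsI by blast

lemma D'_cases:
  assumes "w \<in> D'"
  obtains "w \<in> SD" | m v where "m \<in> K" "v \<in> Dm m" "m v = Some (U lam)" "w = fr m v"
proof (cases "w \<in> SD")
  case False
  with assms obtain m v where m: "m \<in> K" "v \<in> Dm m" "sm_tm lam fr m (V v) = V w"
    unfolding D'_def by blast
  obtain d where "m v = Some d" "\<not> is_var d"
    using m(1,2) Delta_m_subset kept_sb_eval sb_eval_valueE by blast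
  with m show thesis
    using that(2) by (cases "d = U lam") auto
qed

lemma D'_I: "m \<in> K \<Longrightarrow> v \<in> Dm m \<Longrightarrow> m v = Some (U lam) \<Longrightarrow> fr m v \<in> vars G' \<Longrightarrow> fr m v \<in> D'"
  unfolding D'_def by force

lemma D'_Int_vars_SG: "D' \<inter> vars SG \<subseteq> SD"
  using fr_fresh kept_sb_eval by (blast elim: D'_cases)

lemma fresh_var_in_D'_Delta_m:
  assumes "m \<in> SB" "m v = Some (U lam)" "fr m v \<in> D'" shows "v \<in> Dm m"
  using assms(3)
proof (cases rule: D'_cases)
  case 1
  then show ?thesis using fr_fresh[OF assms(1,2)] SD_subset by blast
next
  case (2 m' v')
  then show ?thesis using fr_inj[OF kept_sb_eval[of m'] _ assms(1,2)] by metis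
qed

lemma Tset_nonempty:
  assumes "m \<in> SB" "tA \<in> A" obtains tS where "tS \<in> Tset lam S m tA"
proof -
  obtain q where "q \<in> Qrw lam A" "app_gp m q \<subseteq> sandbox lam SG"
    using assms(1) unfolding sb_eval_def by blast
  then obtain f where f: "\<forall>t\<in>A. f t \<in> rewritings lam t" "app_tp m ` f ` A \<subseteq> sb_tp lam ` SG"
    unfolding Qrw_def app_gp_def sandbox_eq by blast
  then obtain tS where "tS \<in> SG" "app_tp m (f tA) = sb_tp lam tS"
    using assms(2) by blast
  then have "tS \<in> Tset lam S m tA"
    using f(1) assms(2) models_sandbox unfolding Tset_def sandbox_eq by fastforce
  then show thesis by (rule that)
qed

lemma Tset_const_pos:
  assumes "tS \<in> Tset lam S m tA" "\<not> is_var (pos i tS)"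
  shows "app_tm m (pos i tA) = pos i tS"
proof -
  obtain tq where tq: "tS \<in> SG" "tq \<in> rewritings lam tA" "models SD tS (app_tp m tq)"
    using assms(1) unfolding Tset_def by blast
  then have "app_tm m (pos i tq) = pos i tS"
    using models_const_pos[OF tq(3) assms(2)] by simp
  moreover have "pos i tS \<noteq> U lam"
    using tq(1) lam_fresh by (rule pos_neq_fresh_uri)
  ultimately show ?thesis
    using rewritings_pos[OF tq(2), of i] by auto
qed

definition refines :: "('u,'l,'v) mp \<Rightarrow> ('u,'l,'v) mp \<Rightarrow> bool" where
  "refines m' m \<longleftrightarrow> dom m' = vars A \<and> wf_map m' \<and> (\<forall>x. m x \<noteq> Some (U lam) \<longrightarrow> m' x = m x) \<and>
     (\<forall>x\<in>Dm m. \<forall>l. m' x \<noteq> Some (L l))"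

lemma refines_app_tm: "refines m' m \<Longrightarrow> app_tm m c \<noteq> U lam \<Longrightarrow> app_tm m' c = app_tm m c"
  by (cases c) (auto simp: refines_def split: option.splits)

lemma refines_triple:
  assumes "refines m' m" "t \<in> A \<union> C" shows "is_triple (app_tp m' t)"
proof (rule is_tripleI)
  have defined: "\<exists>d. m' x = Some d \<and> \<not> is_var d" if "pos i t = V x" for i x
    using assms rule_varsI[OF assms(2) that] wf_map_domE unfolding refines_def by metis
  show "\<exists>u. pos i (app_tp m' t) = U u" if "i \<in> {1, 2}" for i
  proof (cases "pos i t")
    case (V x)
    then have "x \<in> Dm m"
      using assms(2) that unfolding Delta_m_def by blast
    then show ?thesis
      using V defined[OF V] assms(1) const_tm_cases unfolding refines_def by fastforce
  next
    case (L l)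
    then show ?thesis using rule_pos_not_lit[OF assms(2) that] by simp
  qed simp
  show "\<not> is_var (pos 3 (app_tp m' t))"
    using defined[of 3] by (cases "pos 3 t") auto
qed

lemma refines_object_witness:
  assumes "m \<in> K" "refines m' m" "tA \<in> A" "app_tm m' (pos 3 tA) = L l"
  shows "\<exists>tS\<in>Tset lam S m tA. pos 3 tS = L l \<or> (\<exists>w. pos 3 tS = V w \<and> w \<in> open_vars S)"
proof -
  have not_a: "\<not> cond_a lam S m tA"
    using assms(1,3) unfolding kept_def discarded_def by blast
  show ?thesis
  proof (cases "pos 3 tA")
    case (V x)
    have m'x: "m' x = Some (L l)"
      using assms(4) V app_tm_V_const[of m' x "L l"] by simp
    show ?thesis
    proof (cases "m x = Some (U lam)")
      case True
      have "x \<notin> Dm m"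
        using m'x assms(2) unfolding refines_def by auto
      then have "\<not> cond_b lam S m tA"
        using assms(3) V unfolding Delta_m_def by blast
      then show ?thesis
        using V True unfolding cond_b_def by blast
    next
      case False
      then have "m x = Some (L l)"
        using m'x assms(2) unfolding refines_def by auto
      then show ?thesis
        using not_a V unfolding cond_a_def by blast
    qed
  qed (use assms(4) not_a in \<open>auto simp: cond_a_def\<close>)
qed

lemma refines_Tset_witness:
  assumes "m \<in> K" "refines m' m" "tA \<in> A"
  obtains tS where "tS \<in> Tset lam S m tA"
    and "\<And>l. app_tm m' (pos 3 tA) = L l \<Longrightarrow> pos 3 tS = L l \<or> (\<exists>w. pos 3 tS = V w \<and> w \<in> open_vars S)"
proof (cases "\<exists>l. app_tm m' (pos 3 tA) = L l")
  case True
  then show thesis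
    using that refines_object_witness[OF assms] by fastforce
next
  case False
  obtain tS where "tS \<in> Tset lam S m tA"
    using Tset_nonempty[OF kept_sb_eval[OF assms(1)] assms(3)] .
  then show thesis
    by (rule that) (use False in blast)
qed

lemma refines_models:
  assumes "m \<in> K" "refines m' m" "tA \<in> A"
  shows "\<exists>tS\<in>SG. models SD tS (app_tp m' tA)"
proof -
  obtain tS where tS: "tS \<in> Tset lam S m tA"
    and object: "\<And>l. app_tm m' (pos 3 tA) = L l \<Longrightarrow> pos 3 tS = L l \<or> (\<exists>w. pos 3 tS = V w \<and> w \<in> open_vars S)"
    by (rule refines_Tset_witness[OF assms], rule that)
  have "tS \<in> SG"
    using tS unfolding Tset_def by blast
  have triple: "is_triple (app_tp m' tA)"
    using refines_triple assms(2,3) by blast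
  have "models SD tS (app_tp m' tA)"
  proof (rule models_linearI)
    show "linear {tS}"
      using linear_SG \<open>tS \<in> SG\<close> by (auto intro: linear_subset)
    show "\<not> is_var (pos i (app_tp m' tA))" for i
      using triple by (rule triple_not_var)
    show "pos i (app_tp m' tA) = pos i tS" if "\<not> is_var (pos i tS)" for i
    proof -
      have "app_tm m (pos i tA) = pos i tS"
        using tS that by (rule Tset_const_pos)
      moreover have "pos i tS \<noteq> U lam"
        using \<open>tS \<in> SG\<close> lam_fresh by (rule pos_neq_fresh_uri)
      ultimately show ?thesis
        using refines_app_tm[OF assms(2)] by (metis pos_app_tp)
    qed
    show "pos i (app_tp m' tA) \<noteq> L l" if "i \<in> {1, 2, 3}" "pos i tS = V w" "w \<in> SD" for i w l
    proof (cases "i = 3")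
      case True
      then show ?thesis
        using object[of l] that(2,3) by (auto simp: open_vars_def)
    next
      case False
      then show ?thesis
        using that(1) triple_uri[OF triple, of i] by auto
    qed
  qed
  then show ?thesis
    using \<open>tS \<in> SG\<close> by blast
qed

lemma refines_instance:
  assumes "m \<in> K" "refines m' m"
  shows "app_gp m' A \<in> instances S" and "app_gp m' C \<subseteq> rule_app A C (app_gp m' A)"
proof -
  have graph: "is_graph (app_gp m' P)" if "P \<subseteq> A \<union> C" "finite P" for P
    using that refines_triple[OF assms(2)] by (auto simp: is_graph_def app_gp_def)
  show "app_gp m' A \<in> instances S"
    using graph[OF _ finite_A] refines_models[OF assms] by (auto simp: instances_def app_gp_def)
  have "m' \<in> eval A (app_gp m' A)"
    using assms(2) by (simp add: eval_def refines_def)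
  then show "app_gp m' C \<subseteq> rule_app A C (app_gp m' A)"
    using graph[OF _ finite_C] unfolding rule_app_def by blast
qed

lemma placeholder_image:
  assumes "app_tp \<mu> (sm_tp lam fr m c) = t" "is_triple t" "pos i c = V x" "m x = Some (U lam)"
  shows "\<mu> (fr m x) = Some (pos i t)"
proof -
  have "pos i t = app_tm \<mu> (sm_tm lam fr m (pos i c))"
    using assms(1) by (metis pos_app_tp pos_sm_tp)
  then have "app_tm \<mu> (V (fr m x)) = pos i t"
    using assms(3,4) by simp
  then show ?thesis
    using triple_not_var[OF assms(2)] by (rule app_tm_V_const)
qed

text \<open>Placeholders that do not occur in c keep the value \<lambda>. This is harmless: \<lambda> is an
  ordinary URI, and it only ever meets variable positions of schema triples.\<close>

definition concretise :: "('u,'l,'v) mp \<Rightarrow> ('u,'l,'v) mp \<Rightarrow> ('u,'l,'v) tp \<Rightarrow> ('u,'l,'v) mp" where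
  "concretise \<mu> m c x = (if x \<in> vars A then
     Some (if m x = Some (U lam) \<and> x \<in> vars_tp c then the (\<mu> (fr m x)) else the (m x)) else None)"

context
  fixes m c t \<mu>
  assumes m: "m \<in> SB" and c: "c \<in> C" and t: "is_triple t" and \<mu>: "app_tp \<mu> (sm_tp lam fr m c) = t"
begin

lemma concretise_placeholder: "pos i c = V x \<Longrightarrow> m x = Some (U lam) \<Longrightarrow> concretise \<mu> m c x = Some (pos i t)"
  using placeholder_image[OF \<mu> t] rule_varsI[of c] c vars_tpI[of i c x] by (simp add: concretise_def)

lemma concretise_other: "m x \<noteq> Some (U lam) \<Longrightarrow> concretise \<mu> m c x = m x"
  using sb_evalD[OF m] by (cases "m x") (auto simp: concretise_def)

lemma concretise_app: "app_tp (concretise \<mu> m c) c = t"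
proof -
  have "app_tm (concretise \<mu> m c) (pos i c) = pos i t" for i
  proof (cases "pos i c")
    case (V x)
    obtain d where d: "m x = Some d" "\<not> is_var d"
      using m rule_varsI[of c i x] c V by (blast elim: sb_eval_valueE)
    have "pos i t = app_tm \<mu> (sm_tm lam fr m (V x))"
      using \<mu> V by (metis pos_app_tp pos_sm_tp)
    then show ?thesis
      using V d concretise_placeholder[OF V] concretise_other[of x] by (cases "d = U lam") auto
  qed (use \<mu> in \<open>metis app_tm_const sm_tm_const is_var.simps(2,3) pos_app_tp pos_sm_tp\<close>)+
  then show ?thesis
    by (intro triple_eqI) simp_all
qed

lemma concretise_wf: "wf_map (concretise \<mu> m c)"
  unfolding wf_map_def ran_def
proof (intro ballI, clarify)
  fix x d assume x: "concretise \<mu> m c x = Some d" "is_var d"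
  then have "x \<in> vars A"
    by (simp add: concretise_def split: if_split_asm)
  obtain e where e: "m x = Some e" "\<not> is_var e"
    using m \<open>x \<in> vars A\<close> by (rule sb_eval_valueE)
  show False
  proof (cases "e = U lam \<and> x \<in> vars_tp c")
    case True
    then obtain i where "pos i c = V x"
      by (blast elim: vars_tpE)
    then show False
      using x e True concretise_placeholder triple_not_var[OF t] by fastforce
  qed (use x e \<open>x \<in> vars A\<close> in \<open>auto simp: concretise_def\<close>)
qed

lemma concretise_refines:
  assumes kept: "m \<in> K" and nolit: "\<forall>v\<in>D'. \<forall>l. \<mu> v \<noteq> Some (L l)"
  shows "refines (concretise \<mu> m c) m"
proof -
  have "concretise \<mu> m c x \<noteq> Some (L l)" if x: "x \<in> Dm m" for x l
  proof (cases "m x = Some (U lam)")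
    case True
    show ?thesis
    proof (cases "x \<in> vars_tp c")
      case True
      then obtain i where i: "pos i c = V x"
        by (blast elim: vars_tpE)
      have "sm_tp lam fr m c \<in> G'"
        using kept c by (auto simp: G'_def)
      then have "fr m x \<in> vars G'"
        using i \<open>m x = Some (U lam)\<close> varsI[of _ G' i] by simp
      then have "fr m x \<in> D'"
        using D'_I kept x \<open>m x = Some (U lam)\<close> by blast
      then show ?thesis
        using nolit placeholder_image[OF \<mu> t i \<open>m x = Some (U lam)\<close>] concretise_placeholder[OF i \<open>m x = Some (U lam)\<close>]
        by auto
    qed (use \<open>m x = Some (U lam)\<close> x Delta_m_subset in \<open>auto simp: concretise_def\<close>)
  next
    case False
    then show ?thesis
      using kept x concretise_other by (auto simp: kept_def discarded_def)
  qed
  moreover have "dom (concretise \<mu> m c) = vars A"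
    by (auto simp: concretise_def split: if_split_asm)
  ultimately show ?thesis
    using concretise_wf concretise_other unfolding refines_def by blast
qed

end

lemma SD_subset_D': "SD \<subseteq> D'"
  unfolding D'_def by blast

lemma score_triple_sound:
  assumes "is_triple t" "tS \<in> G'" "models D' tS t"
  shows "\<exists>J\<in>instances S. t \<in> rule_app A C J"
  using assms(2) unfolding G'_def
proof (elim UnE UN_E imageE)
  assume "tS \<in> SG"
  moreover have "models SD tS t"
    using assms(3) by (rule models_nolit_antimono) (use SD_subset_D' in blast)
  ultimately have "{t} \<in> instances S"
    using assms(1) by (auto simp: instances_def is_graph_def)
  then show ?thesis
    unfolding rule_app_def by blast
next
  fix m c assume m: "m \<in> K" and c: "c \<in> C" and tS: "tS = sm_tp lam fr m c"
  obtain \<mu> where \<mu>: "app_tp \<mu> (sm_tp lam fr m c) = t" "\<forall>v\<in>D'. \<forall>l. \<mu> v \<noteq> Some (L l)"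
    using assms(3) tS unfolding models_def by blast
  let ?m' = "concretise \<mu> m c"
  have "refines ?m' m"
    using kept_sb_eval[OF m] c assms(1) \<mu>(1) m \<mu>(2) by (rule concretise_refines)
  moreover have "t \<in> app_gp ?m' C"
    using concretise_app[OF kept_sb_eval[OF m] c assms(1) \<mu>(1)] c unfolding app_gp_def by blast
  ultimately show ?thesis
    using refines_instance[OF m] by blast
qed

lemma instances_score_sound: "instances (G', D') \<subseteq> (\<Union>I\<in>instances S. {I'. I' \<subseteq> rule_app A C I})"
proof
  fix I' assume "I' \<in> instances (G', D')"
  then have "is_graph I'" "\<forall>t\<in>I'. \<exists>tS\<in>G'. models D' tS t"
    by (simp_all add: instances_def)
  then have "\<exists>I\<in>instances S. I' \<subseteq> rule_app A C I"
    using score_triple_sound by (intro subset_rule_app_instanceI) (auto simp: is_graph_def)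
  then show "I' \<in> (\<Union>I\<in>instances S. {I'. I' \<subseteq> rule_app A C I})"
    by blast
qed

section \<open>Completeness via sandbox abstraction\<close>

lemma linear_C: "linear C"
  using rule_ok by (simp add: rule_ok_def)

lemma sm_tp_var_pos:
  assumes "m \<in> SB" "c \<in> C" "pos i (sm_tp lam fr m c) = V w"
  obtains x where "pos i c = V x" "m x = Some (U lam)" "w = fr m x"
proof (cases "pos i c")
  case (V x)
  obtain d where d: "m x = Some d" "\<not> is_var d"
    using assms(1) rule_varsI[of c i x] assms(2) V by (blast elim: sb_eval_valueE)
  show thesis
  proof (cases "d = U lam")
    case True
    then show thesis
      using assms(3) V d by (intro that[of x]) simp_all
  next
    case False
    then show thesis
      using assms(3) V d by simp
  qed
qed (use assms(3) in simp_all)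

lemma linear_sm_tp:
  assumes "m \<in> SB" "c \<in> C" shows "linear {sm_tp lam fr m c}"
proof (rule linear_singletonI)
  fix i j w
  assume ij: "i \<in> {1, 2, 3}" "j \<in> {1, 2, 3}"
    and "pos i (sm_tp lam fr m c) = V w" "pos j (sm_tp lam fr m c) = V w"
  then obtain x y where x: "pos i c = V x" "m x = Some (U lam)" "w = fr m x"
    and y: "pos j c = V y" "m y = Some (U lam)" "w = fr m y"
    using sm_tp_var_pos[OF assms] by metis
  have "x = y"
    using fr_inj[OF assms(1) x(2) assms(1) y(2)] x(3) y(3) by simp
  then show "i = j"
    using linear_C assms(2) ij x(1) y(1) unfolding linear_def by (metis is_var.simps(1))
qed

end

locale sandbox_abstraction = score_setting S A C lam fr
  for S :: "('u,'l,'v) schema" and A C lam fr +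
  fixes I :: "('u,'l,'v) tp set" and m :: "('u,'l,'v) mp" and g :: "('u,'l,'v) tp \<Rightarrow> ('u,'l,'v) tp"
  assumes I_instance: "I \<in> instances S" and m_match: "m \<in> eval A I" and C_graph: "is_graph (app_gp m C)"
    and witness: "\<And>tA. tA \<in> A \<Longrightarrow> g tA \<in> fst S \<and> models (snd S) (g tA) (app_tp m tA)"
begin

definition pinned :: "'v \<Rightarrow> bool" where
  "pinned x \<longleftrightarrow> (\<exists>tA\<in>A. \<exists>i. pos i tA = V x \<and> \<not> is_var (pos i (g tA)))"

definition sandbox_map :: "('u,'l,'v) mp" where
  "sandbox_map x = (if x \<in> vars A then Some (if pinned x then the (m x) else U lam) else None)"

definition sandbox_rewriting :: "('u,'l,'v) tp \<Rightarrow> ('u,'l,'v) tp" where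
  "sandbox_rewriting tA = (if is_var (pos 1 (g tA)) then U lam else pos 1 tA,
                   if is_var (pos 2 (g tA)) then U lam else pos 2 tA,
                   if is_var (pos 3 (g tA)) then U lam else pos 3 tA)"

lemma pos_sandbox_rewriting:
  "i \<in> {1, 2, 3} \<Longrightarrow> pos i (sandbox_rewriting tA) = (if is_var (pos i (g tA)) then U lam else pos i tA)"
  by (auto simp: sandbox_rewriting_def)

lemma match_wf: "wf_map m"
  using m_match by (simp add: eval_def)

lemma g_const_pos: "tA \<in> A \<Longrightarrow> \<not> is_var (pos i (g tA)) \<Longrightarrow> app_tm m (pos i tA) = pos i (g tA)"
  using witness models_const_pos by (metis pos_app_tp)

lemma sandbox_map_pinned:
  assumes "tA \<in> A" "pos i tA = V x" "\<not> is_var (pos i (g tA))"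
  shows "sandbox_map x = Some (pos i (g tA))"
proof -
  have "app_tm m (V x) = pos i (g tA)"
    using g_const_pos[OF assms(1,3)] assms(2) by simp
  then have "m x = Some (pos i (g tA))"
    using assms(3) by (rule app_tm_V_const)
  then show ?thesis
    using assms varsI[OF assms(1,2)] by (auto simp: sandbox_map_def pinned_def)
qed

lemma sandbox_map_cases: "sandbox_map x = Some d \<Longrightarrow> d = U lam \<or> m x = Some d"
  using m_match by (cases "m x") (auto simp: sandbox_map_def eval_def split: if_split_asm)

lemma sandbox_map_rewriting:
  assumes "tA \<in> A" shows "app_tp sandbox_map (sandbox_rewriting tA) = sb_tp lam (g tA)"
proof -
  have "app_tm sandbox_map (pos i (sandbox_rewriting tA)) = sb_tm lam (pos i (g tA))" if "i \<in> {1, 2, 3}" for i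
  proof (cases "is_var (pos i (g tA))")
    case True
    then show ?thesis
      using that by (cases "pos i (g tA)") (auto simp: pos_sandbox_rewriting)
  next
    case False
    then show ?thesis
      using that g_const_pos[OF assms False] sandbox_map_pinned[OF assms _ False]
      by (cases "pos i tA") (auto simp: pos_sandbox_rewriting)
  qed
  then show ?thesis
    by (intro triple_eqI) simp_all
qed

lemma sandbox_rewriting_rewritings: "sandbox_rewriting tA \<in> rewritings lam tA"
  by (auto simp: rewritings_def pos_sandbox_rewriting)

lemma sandbox_map_sb_eval: "sandbox_map \<in> SB"
proof -
  have "dom sandbox_map = vars A"
    by (auto simp: sandbox_map_def split: if_split_asm)
  moreover have "wf_map sandbox_map"
    unfolding wf_map_def ran_def using sandbox_map_cases wf_mapD[OF match_wf] by fastforce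
  moreover have "sandbox_rewriting ` A \<in> Qrw lam A"
    using sandbox_rewriting_rewritings unfolding Qrw_def by blast
  moreover have "app_gp sandbox_map (sandbox_rewriting ` A) \<subseteq> sandbox lam SG"
    using sandbox_map_rewriting witness by (auto simp: app_gp_def sandbox_eq)
  ultimately show ?thesis
    unfolding sb_eval_def by blast
qed

lemma g_Tset:
  assumes "tA \<in> A" shows "g tA \<in> Tset lam S sandbox_map tA"
proof -
  have "app_tp sandbox_map (sandbox_rewriting tA) \<in> sandbox lam SG"
    using sandbox_map_rewriting[OF assms] witness[OF assms] by (simp add: sandbox_eq)
  moreover have "models SD (g tA) (app_tp sandbox_map (sandbox_rewriting tA))"
    using sandbox_map_rewriting[OF assms] models_sandbox by simp
  ultimately show ?thesis
    using witness[OF assms] sandbox_rewriting_rewritings unfolding Tset_def by blast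
qed

lemma g_object_literal:
  assumes "tA \<in> A" "app_tm m (pos 3 tA) = L l"
  shows "pos 3 (g tA) = L l \<or> (\<exists>w. pos 3 (g tA) = V w \<and> w \<in> open_vars S)"
proof -
  have "pos 3 (app_tp m tA) = L l"
    using assms(2) by simp
  then have "pos 3 (g tA) = L l \<or> (\<exists>w. pos 3 (g tA) = V w \<and> w \<notin> SD)"
    by (rule models_literal_pos[OF conjunct2[OF witness[OF assms(1)]]])
  moreover have "w \<in> vars SG" if "pos 3 (g tA) = V w" for w
    using varsI[OF conjunct1[OF witness[OF assms(1)]] that] .
  ultimately show ?thesis
    unfolding open_vars_def by blast
qed

lemma match_triple: "t \<in> A \<union> C \<Longrightarrow> is_triple (app_tp m t)"
  using I_instance m_match C_graph by (auto simp: instances_def is_graph_def eval_def app_gp_def)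

lemma match_Delta_m_not_lit:
  assumes "x \<in> Dm sandbox_map" shows "m x \<noteq> Some (L l)"
proof
  assume mx: "m x = Some (L l)"
  from assms consider (subj_pred) t i where "t \<in> A \<union> C" "i \<in> {1, 2}" "pos i t = V x"
    | (obj) tA where "tA \<in> A" "pos 3 tA = V x" "cond_b lam S sandbox_map tA"
    unfolding Delta_m_def by blast
  then show False
  proof cases
    case subj_pred
    then obtain u where "pos i (app_tp m t) = U u"
      using triple_uri match_triple by blast
    then show False
      using subj_pred(3) mx by simp
  next
    case obj
    have "sandbox_map x = Some (U lam)"
      using obj(2,3) unfolding cond_b_def by auto
    then have "\<not> pinned x"
      using mx by (auto simp: sandbox_map_def split: if_split_asm)
    then have "is_var (pos 3 (g tA))"
      using obj(1,2) unfolding pinned_def by blast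
    moreover have "pos 3 (g tA) = L l \<or> (\<exists>w. pos 3 (g tA) = V w \<and> w \<in> open_vars S)"
      using g_object_literal obj(1,2) mx by simp
    ultimately obtain w where "pos 3 (g tA) = V w" "w \<in> open_vars S"
      by auto
    then show False
      using obj(3) g_Tset[OF obj(1)] unfolding cond_b_def by blast
  qed
qed

lemma sandbox_map_not_cond_a:
  assumes "tA \<in> A" shows "\<not> cond_a lam S sandbox_map tA"
proof
  assume "cond_a lam S sandbox_map tA"
  then obtain l where l: "pos 3 tA = L l \<or> (\<exists>v. pos 3 tA = V v \<and> sandbox_map v = Some (L l))"
    and none: "\<not> (\<exists>tS\<in>Tset lam S sandbox_map tA. pos 3 tS = L l \<or> (\<exists>w. pos 3 tS = V w \<and> w \<in> open_vars S))"
    unfolding cond_a_def by blast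
  have "app_tm m (pos 3 tA) = L l"
  proof (cases "pos 3 tA = L l")
    case False
    then obtain v where "pos 3 tA = V v" "sandbox_map v = Some (L l)"
      using l by blast
    then show ?thesis
      using sandbox_map_cases[of v "L l"] by simp
  qed simp
  then show False
    using g_object_literal[OF assms] g_Tset[OF assms] none by blast
qed

lemma sandbox_map_kept: "sandbox_map \<in> K"
proof -
  have "sandbox_map v \<noteq> Some (L l)" if "v \<in> Dm sandbox_map" for v l
    using sandbox_map_cases match_Delta_m_not_lit[OF that] by blast
  then show ?thesis
    using sandbox_map_sb_eval sandbox_map_not_cond_a unfolding kept_def discarded_def by blast
qed

lemma models_sm_tp_sandbox_map:
  assumes "c \<in> C" shows "models D' (sm_tp lam fr sandbox_map c) (app_tp m c)"
proof (rule models_linearI)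
  show "linear {sm_tp lam fr sandbox_map c}"
    using sandbox_map_sb_eval assms by (rule linear_sm_tp)
  show "\<not> is_var (pos i (app_tp m c))" for i
    using match_triple assms triple_not_var by blast
  show "pos i (app_tp m c) = pos i (sm_tp lam fr sandbox_map c)" if "\<not> is_var (pos i (sm_tp lam fr sandbox_map c))" for i
  proof (cases "pos i c")
    case (V x)
    have "\<not> is_var (sm_tm lam fr sandbox_map (V x))"
      using that V by simp
    then obtain d where d: "sandbox_map x = Some d" "d \<noteq> U lam"
      by (cases "sandbox_map x") (auto split: if_splits)
    then have "m x = Some d"
      using sandbox_map_cases by blast
    then show ?thesis
      using V d by simp
  qed simp_all
  show "pos i (app_tp m c) \<noteq> L l" if "pos i (sm_tp lam fr sandbox_map c) = V w" "w \<in> D'" for i w l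
  proof -
    obtain x where x: "pos i c = V x" "sandbox_map x = Some (U lam)" "w = fr sandbox_map x"
      using sandbox_map_sb_eval assms \<open>pos i (sm_tp lam fr sandbox_map c) = V w\<close> by (rule sm_tp_var_pos)
    then have "x \<in> Dm sandbox_map"
      using fresh_var_in_D'_Delta_m[OF sandbox_map_sb_eval] \<open>w \<in> D'\<close> by blast
    then show ?thesis
      using match_Delta_m_not_lit x(1) by (cases "m x") auto
  qed
qed

end

context score_setting
begin

lemma rule_triple_complete:
  assumes "I \<in> instances S" "m \<in> eval A I" "is_graph (app_gp m C)" "c \<in> C"
  shows "\<exists>tS\<in>G'. models D' tS (app_tp m c)"
proof -
  have "\<exists>tS\<in>SG. models SD tS (app_tp m tA)" if "tA \<in> A" for tA
  proof -
    have "app_gp m A \<subseteq> I"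
      using assms(2) by (simp add: eval_def)
    then have "app_tp m tA \<in> I"
      using that by (auto simp: app_gp_def)
    then show ?thesis
      using assms(1) by (simp add: instances_def)
  qed
  then have "\<forall>tA\<in>A. \<exists>tS. tS \<in> SG \<and> models SD tS (app_tp m tA)"
    by blast
  from bchoice[OF this] obtain g where g: "\<forall>tA\<in>A. g tA \<in> SG \<and> models SD (g tA) (app_tp m tA)" ..
  interpret sandbox_abstraction S A C lam fr I m g
    using schema_ok rule_ok fresh assms(1-3) g
    by (simp add: sandbox_abstraction_def sandbox_abstraction_axioms_def score_setting_def)
  have "sm_tp lam fr sandbox_map c \<in> G'"
    unfolding G'_def by (intro UnI2 UN_I[OF sandbox_map_kept] imageI assms(4))
  with models_sm_tp_sandbox_map[OF assms(4)] show ?thesis ..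
qed

lemma instance_triple_complete:
  assumes "I \<in> instances S" "t \<in> I" shows "\<exists>tS\<in>G'. models D' tS t"
proof -
  obtain tS where tS: "tS \<in> SG" "models SD tS t"
    using assms by (auto simp: instances_def)
  have "D' \<inter> vars_tp tS \<subseteq> SD"
    using D'_Int_vars_SG tS(1) unfolding vars_def by blast
  then have "models D' tS t"
    by (rule models_nolit_antimono[OF tS(2)])
  then show ?thesis
    using tS(1) unfolding G'_def by blast
qed

lemma instances_score_complete: "(\<Union>I\<in>instances S. {I'. I' \<subseteq> rule_app A C I}) \<subseteq> instances (G', D')"
proof clarify
  fix I I' assume I: "I \<in> instances S" and sub: "I' \<subseteq> rule_app A C I"
  have "is_graph (rule_app A C I)"
    using I finite_A by (intro is_graph_rule_app) (simp_all add: instances_def)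
  then have "is_graph I'"
    using sub by (auto simp: is_graph_def intro: finite_subset)
  moreover have "\<exists>tS\<in>G'. models D' tS t" if "t \<in> rule_app A C I" for t
    using that unfolding rule_app_def
  proof (elim UnE UnionE CollectE exE conjE)
    assume "t \<in> I"
    with I show ?thesis by (rule instance_triple_complete)
  next
    fix X m' assume "t \<in> X" "X = app_gp m' C" "m' \<in> eval A I" "is_graph (app_gp m' C)"
    then show ?thesis
      using rule_triple_complete[OF I] by (auto simp: app_gp_def)
  qed
  ultimately show "I' \<in> instances (G', D')"
    using sub by (auto simp: instances_def)
qed

end

theorem theorem2:
  fixes S :: "('u,'l,'v) schema" and A C :: "('u,'l,'v) tp set"
    and lam :: 'u and fr :: "('u,'l,'v) mp \<Rightarrow> 'v \<Rightarrow> 'v"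
  assumes "infinite (UNIV :: 'u set)" and "infinite (UNIV :: 'l set)" and "infinite (UNIV :: 'v set)"
    and "schema_ok S" and "rule_ok A C"
    and "fresh_choice lam fr S A C"
  shows "instances (score lam fr S A C) = (\<Union>I\<in>instances S. {I'. I' \<subseteq> rule_app A C I})"
proof -
  interpret score_setting S A C lam fr
    using assms(4-6) by unfold_locales
  show ?thesis
    unfolding score_eq using instances_score_sound instances_score_complete by (rule subset_antisym)
qed

end
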